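(* Let $\Sigma=(I,X,\mathcal U,\phi,Y,h)$ be a forward complete control system with outputs. If $\Sigma$ is OUAG and OCEP, then it is OULS.
   Context: Let $I\in\{\mathbb N_0,\mathbb R_0^+\}$. A forward complete control system with outputs $\Sigma=(I,X,\mathcal U,\phi,Y,h)$ consists of: a normed space $(X,\|\cdot\|_X)$; a vector space $U$ and a normed linear subspace $(\mathcal U,\|\cdot\|_{\mathcal U})$ of $\{u:I\to U\}$ such that for all $u\in\mathcal U,\tau\in I$, $u(\cdot+\tau)\in\mathcal U$ with $\|u(\cdot+\tau)\|_{\mathcal U}\le\|u\|_{\mathcal U}$, and for $t_2\ge t_1\ge 0$ the function $u|_{[t_1,t_2]}$ ($u$ on $[t_1,t_2]$, $0$ elsewhere) lies in $\mathcal U$ with norm $\le\|u\|_{\mathcal U}$; a map $\phi:I\times X\times\mathcal U\to X$ with $\phi(0,x,u)=x$, causality, and cocycle property $\phi(t+s,x,u)=\phi(s,\phi(t,x,u),u(t+\cdot))$; a normed space $Y$ and $h:X\times U\to Y$. Write $y(t,x,u)=h(\phi(t,x,u),u(t))$, $B_r=\{x:\|x\|_X<r\}$, $B_{r,\mathcal U}=\{u:\|u\|_{\mathcal U}<r\}$; $\mathcal K_\infty$ = unbounded continuous strictly increasing functions $\mathbb R_0^+\to\mathbb R_0^+$ vanishing at $0$. OUAG: $\exists\gamma\in\mathcal K_\infty$ such that for all $\varepsilon,r,s>0$ there is $\tau\in I$ with $\|y(t,x,u)\|_Y\le\varepsilon+\gamma(\|u\|_{\mathcal U})$ for all $x\in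 B_r,u\in B_{s,\mathcal U},t\ge\tau$. OCEP: for every $\tau\in I,\varepsilon>0$ there is $\delta>0$ such that $t\in I$, $t\le\tau$, $\|x\|_X\le\delta$, $\|u\|_{\mathcal U}\le\delta$ imply $\|y(t,x,u)\|_Y\le\varepsilon$. OULS: $\exists r>0,\sigma,\gamma\in\mathcal K_\infty$ with $\|y(t,x,u)\|_Y\le\sigma(\|x\|_X)+\gamma(\|u\|_{\mathcal U})$ for all $x\in B_r,u\in B_{r,\mathcal U},t\in I$ (equivalently: for every $\varepsilon>0$ there is $\delta>0$ such that $\|x\|_X\le\delta$, $\|u\|_{\mathcal U}\le\delta$ imply $\|y(t,x,u)\|_Y\le\varepsilon$ for all $t\in I$). *)

theory Defs
  imports "HOL-Analysis.Analysis"
begin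

text \<open>Time set I is encoded as a set of reals T, which is either the
  nonnegative integers (as reals) or the nonnegative reals.
  Inputs are functions real => 'u that vanish outside T.\<close>

definition time_set :: "real set \<Rightarrow> bool" where
  "time_set T \<longleftrightarrow> T = range real \<or> T = {0..}"

definition shift_input :: "real set \<Rightarrow> (real \<Rightarrow> 'u::real_vector) \<Rightarrow> real \<Rightarrow> real \<Rightarrow> 'u" where
  "shift_input T u \<tau> = (\<lambda>t. if t \<in> T then u (t + \<tau>) else 0)"

definition restrict_input :: "(real \<Rightarrow> 'u::real_vector) \<Rightarrow> real \<Rightarrow> real \<Rightarrow> real \<Rightarrow> 'u" where
  "restrict_input u t1 t2 = (\<lambda>t. if t1 \<le> t \<and> t \<le> t2 then u t else 0)"

definition sys_output :: "(real \<Rightarrow> 'x \<Rightarrow> (real \<Rightarrow> 'u) \<Rightarrow> 'x) \<Rightarrow> ('x \<Rightarrow> 'u \<Rightarrow> 'y)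
    \<Rightarrow> real \<Rightarrow> 'x \<Rightarrow> (real \<Rightarrow> 'u) \<Rightarrow> 'y" where
  "sys_output phi h t x u = h (phi t x u) (u t)"

text \<open>Forward complete control system with outputs (I, X, U, phi, Y, h):
  X is the type 'x, Y the type 'y, U the type 'u; the input space is the set
  Us with norm nU.\<close>

definition control_system ::
  "real set \<Rightarrow> (real \<Rightarrow> 'u::real_vector) set \<Rightarrow> ((real \<Rightarrow> 'u) \<Rightarrow> real)
    \<Rightarrow> (real \<Rightarrow> 'x::real_normed_vector \<Rightarrow> (real \<Rightarrow> 'u) \<Rightarrow> 'x)
    \<Rightarrow> ('x \<Rightarrow> 'u \<Rightarrow> 'y::real_normed_vector) \<Rightarrow> bool" where
  "control_system T Us nU phi h \<longleftrightarrow>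
     time_set T \<and>
     \<comment> \<open>inputs are functions on T (zero outside T)\<close>
     (\<forall>u\<in>Us. \<forall>t. t \<notin> T \<longrightarrow> u t = 0) \<and>
     \<comment> \<open>linear subspace\<close>
     (\<lambda>t. 0) \<in> Us \<and>
     (\<forall>u\<in>Us. \<forall>v\<in>Us. (\<lambda>t. u t + v t) \<in> Us) \<and>
     (\<forall>u\<in>Us. \<forall>c::real. (\<lambda>t. c *\<^sub>R u t) \<in> Us) \<and>
     \<comment> \<open>nU is a norm on Us\<close>
     (\<forall>u\<in>Us. nU u \<ge> 0) \<and>
     (\<forall>u\<in>Us. nU u = 0 \<longleftrightarrow> u = (\<lambda>t. 0)) \<and>
     (\<forall>u\<in>Us. \<forall>c::real. nU (\<lambda>t. c *\<^sub>R u t) = \<bar>c\<bar> * nU u) \<and>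
     (\<forall>u\<in>Us. \<forall>v\<in>Us. nU (\<lambda>t. u t + v t) \<le> nU u + nU v) \<and>
     \<comment> \<open>shift axiom\<close>
     (\<forall>u\<in>Us. \<forall>\<tau>\<in>T. shift_input T u \<tau> \<in> Us \<and> nU (shift_input T u \<tau>) \<le> nU u) \<and>
     \<comment> \<open>restriction axiom\<close>
     (\<forall>u\<in>Us. \<forall>t1\<in>T. \<forall>t2\<in>T. t1 \<le> t2 \<longrightarrow>
         restrict_input u t1 t2 \<in> Us \<and> nU (restrict_input u t1 t2) \<le> nU u) \<and>
     \<comment> \<open>identity property\<close>
     (\<forall>x. \<forall>u\<in>Us. phi 0 x u = x) \<and>
     \<comment> \<open>causality\<close>
     (\<forall>t\<in>T. \<forall>x. \<forall>u\<in>Us. \<forall>v\<in>Us. (\<forall>s\<in>T. s \<le> t \<longrightarrow> u s = v s) \<longrightarrow>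
         phi t x u = phi t x v) \<and>
     \<comment> \<open>cocycle property\<close>
     (\<forall>t\<in>T. \<forall>s\<in>T. \<forall>x. \<forall>u\<in>Us.
         phi (t + s) x u = phi s (phi t x u) (shift_input T u t))"

definition Kinf :: "(real \<Rightarrow> real) \<Rightarrow> bool" where
  "Kinf f \<longleftrightarrow> continuous_on {0..} f \<and> strict_mono_on {0..} f \<and> f 0 = 0 \<and>
     (\<forall>M. \<exists>r\<ge>0. f r > M)"

definition OUAG where
  "OUAG T Us nU phi h \<longleftrightarrow>
    (\<exists>\<gamma>. Kinf \<gamma> \<and> (\<forall>\<epsilon>>0. \<forall>r>0. \<forall>s>0. \<exists>\<tau>\<in>T. \<forall>x u t.
        norm x < r \<and> u \<in> Us \<and> nU u < s \<and> t \<in> T \<and> t \<ge> \<tau> \<longrightarrow>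
        norm (sys_output phi h t x u) \<le> \<epsilon> + \<gamma> (nU u)))"

definition OCEP where
  "OCEP T Us nU phi h \<longleftrightarrow>
    (\<forall>\<tau>\<in>T. \<forall>\<epsilon>>0. \<exists>\<delta>>0. \<forall>t x u.
        t \<in> T \<and> t \<le> \<tau> \<and> norm x \<le> \<delta> \<and> u \<in> Us \<and> nU u \<le> \<delta> \<longrightarrow>
        norm (sys_output phi h t x u) \<le> \<epsilon>)"

definition OULS where
  "OULS T Us nU phi h \<longleftrightarrow>
    (\<exists>r>0. \<exists>\<sigma> \<gamma>. Kinf \<sigma> \<and> Kinf \<gamma> \<and> (\<forall>x u t.
        norm x < r \<and> u \<in> Us \<and> nU u < r \<and> t \<in> T \<longrightarrow>
        norm (sys_output phi h t x u) \<le> \<sigma> (norm x) + \<gamma> (nU u)))"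

end

theory Submission imports Defs begin

text \<open>OUAG bounds the output by \<open>\<epsilon> + \<gamma>(\<parallel>u\<parallel>)\<close> after a time \<open>\<tau>\<close> that is uniform on
  bounded sets, and OCEP bounds it on the finite window up to \<open>\<tau>\<close>; as \<open>\<gamma>\<close> is continuous
  at 0, together they give the \<open>\<epsilon>\<close>-\<open>\<delta>\<close> form of OULS, uniformly in time. To obtain a
  K-infinity bound, let \<open>\<delta> n\<close> belong to \<open>\<epsilon> = 2^-n\<close> and put
  \<open>\<sigma> s = s + (\<Sum>k. 2^-k * min 1 (s / \<delta> (k+1)))\<close>. If \<open>n\<close> is least with \<open>\<delta> n < s\<close>, then
  \<open>s \<le> \<delta> (n-1)\<close> bounds the output by \<open>2^-(n-1)\<close>, which is the \<open>(n-1)\<close>-st summand of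
  \<open>\<sigma> s\<close>; no monotonicity of \<open>\<delta>\<close> is needed.\<close>

lemma Kinf_nonneg:
  assumes "Kinf \<sigma>" and "0 \<le> s"
  shows "0 \<le> \<sigma> s"
proof -
  have "\<sigma> 0 \<le> \<sigma> s"
    using assms strict_mono_on_leD[of "{0..}" \<sigma> 0 s] by (simp add: Kinf_def)
  then show ?thesis
    using assms(1) by (simp add: Kinf_def)
qed

lemma Kinf_max_le_add:
  assumes "Kinf \<sigma>" and "0 \<le> a" and "0 \<le> b"
  shows "\<sigma> (max a b) \<le> \<sigma> a + \<sigma> b"
  using Kinf_nonneg[OF assms(1)] assms(2,3) by (simp add: max_def)

lemma Kinf_small_near_zero:
  assumes "Kinf \<gamma>" and "\<epsilon> > 0"
  obtains \<eta> where "\<eta> > 0" and "\<And>s. 0 \<le> s \<Longrightarrow> s < \<eta> \<Longrightarrow> \<gamma> s < \<epsilon>"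
proof -
  have "continuous_on {0..} \<gamma>" and "\<gamma> 0 = 0"
    using assms(1) by (auto simp: Kinf_def)
  then obtain \<eta> where "\<eta> > 0" and "\<And>s. s \<in> {0..} \<Longrightarrow> dist s 0 < \<eta> \<Longrightarrow> dist (\<gamma> s) 0 < \<epsilon>"
    using assms(2) unfolding continuous_on_iff by (metis atLeast_iff order_refl)
  then have "\<gamma> s < \<epsilon>" if "0 \<le> s" "s < \<eta>" for s
    using that by (force simp: dist_real_def)
  with \<open>\<eta> > 0\<close> show thesis
    using that by blast
qed

definition ramp_sum :: "(nat \<Rightarrow> real) \<Rightarrow> real \<Rightarrow> real" where
  "ramp_sum \<delta> s = s + (\<Sum>k. (1/2)^k * min 1 (s / \<delta> (Suc k)))"

context
  fixes \<delta> :: "nat \<Rightarrow> real"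
  assumes \<delta>_pos: "\<And>k. \<delta> k > 0"
begin

lemma ramp_term_bounds:
  assumes "0 \<le> s"
  shows "0 \<le> min 1 (s / \<delta> k)" and "min 1 (s / \<delta> k) \<le> 1"
  using assms \<delta>_pos[of k] by auto

lemma ramp_term_mono:
  assumes "s \<le> s'"
  shows "min 1 (s / \<delta> k) \<le> min 1 (s' / \<delta> k)"
proof -
  have "s / \<delta> k \<le> s' / \<delta> k"
    using assms \<delta>_pos[of k] by (simp add: divide_right_mono)
  then show ?thesis
    by linarith
qed

lemma summable_ramp_terms:
  assumes "0 \<le> s"
  shows "summable (\<lambda>k. (1/2::real)^k * min 1 (s / \<delta> (Suc k)))"
proof (rule summable_comparison_test[where g = "\<lambda>k. (1/2::real)^k"])
  show "\<exists>N. \<forall>k\<ge>N. norm ((1/2::real)^k * min 1 (s / \<delta> (Suc k))) \<le> (1/2)^k"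
    using ramp_term_bounds[OF assms] by (auto intro!: mult_left_le_one_le simp: abs_mult)
qed (simp add: summable_geometric)

lemma ramp_sum_ge_self:
  assumes "0 \<le> s"
  shows "s \<le> ramp_sum \<delta> s"
proof -
  have "0 \<le> (\<Sum>k. (1/2::real)^k * min 1 (s / \<delta> (Suc k)))"
    using assms by (intro suminf_nonneg summable_ramp_terms mult_nonneg_nonneg ramp_term_bounds) auto
  then show ?thesis
    unfolding ramp_sum_def by simp
qed

lemma continuous_on_ramp_sum: "continuous_on {0..} (ramp_sum \<delta>)"
proof -
  have "uniform_limit {0..} (\<lambda>n s. \<Sum>k<n. (1/2::real)^k * min 1 (s / \<delta> (Suc k)))
      (\<lambda>s. \<Sum>k. (1/2)^k * min 1 (s / \<delta> (Suc k))) sequentially"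
    using ramp_term_bounds
    by (intro Weierstrass_m_test[where M = "\<lambda>k. (1/2)^k"])
      (auto intro!: mult_left_le_one_le simp: abs_mult summable_geometric)
  moreover have "continuous_on {0..} (\<lambda>s. \<Sum>k<n. (1/2::real)^k * min 1 (s / \<delta> (Suc k)))" for n
    by (intro continuous_intros) (simp add: \<delta>_pos less_imp_neq[symmetric])
  ultimately have "continuous_on {0..} (\<lambda>s. \<Sum>k. (1/2::real)^k * min 1 (s / \<delta> (Suc k)))"
    by (intro uniform_limit_theorem) auto
  then show ?thesis
    unfolding ramp_sum_def by (intro continuous_intros)
qed

lemma Kinf_ramp_sum: "Kinf (ramp_sum \<delta>)"
  unfolding Kinf_def
proof (intro conjI allI continuous_on_ramp_sum strict_mono_onI)
  fix s s' :: real
  assume "s \<in> {0..}" "s < s'"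
  then have "(\<Sum>k. (1/2::real)^k * min 1 (s / \<delta> (Suc k))) \<le> (\<Sum>k. (1/2)^k * min 1 (s' / \<delta> (Suc k)))"
    by (intro suminf_le summable_ramp_terms mult_left_mono ramp_term_mono) auto
  then show "ramp_sum \<delta> s < ramp_sum \<delta> s'"
    unfolding ramp_sum_def using \<open>s < s'\<close> by linarith
next
  show "ramp_sum \<delta> 0 = 0"
    by (simp add: ramp_sum_def)
next
  fix M :: real
  have "max 0 (M + 1) \<le> ramp_sum \<delta> (max 0 (M + 1))"
    by (rule ramp_sum_ge_self) simp
  then show "\<exists>s\<ge>0. M < ramp_sum \<delta> s"
    by (intro exI[of _ "max 0 (M + 1)"]) auto
qed

lemma power_half_le_ramp_sum:
  assumes "\<delta> (Suc m) < s"
  shows "(1/2)^m \<le> ramp_sum \<delta> s"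
proof -
  have "0 \<le> s"
    using assms \<delta>_pos[of "Suc m"] by linarith
  have "min 1 (s / \<delta> (Suc m)) = 1"
    using assms \<delta>_pos[of "Suc m"] by simp
  then have "(1/2::real)^m = (\<Sum>k\<in>{m}. (1/2)^k * min 1 (s / \<delta> (Suc k)))"
    by simp
  also have "\<dots> \<le> (\<Sum>k. (1/2)^k * min 1 (s / \<delta> (Suc k)))"
    using \<open>0 \<le> s\<close> ramp_term_bounds by (intro sum_le_suminf summable_ramp_terms) auto
  also have "\<dots> \<le> ramp_sum \<delta> s"
    unfolding ramp_sum_def using \<open>0 \<le> s\<close> by simp
  finally show ?thesis .
qed

end

lemma nonpos_if_le_geometric:
  assumes "\<And>n. (x::real) \<le> (1/2)^n"
  shows "x \<le> 0"
proof (rule ccontr)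
  assume "\<not> x \<le> 0"
  then obtain n where "(1/2::real)^n < x"
    using real_arch_pow_inv[of x "1/2"] by auto
  then show False
    using assms[of n] by simp
qed

lemma Kinf_majorant_if_uniformly_small:
  fixes g a :: "'a \<Rightarrow> real"
  assumes nonneg: "\<And>z. z \<in> S \<Longrightarrow> 0 \<le> a z"
    and small: "\<And>\<epsilon>. \<epsilon> > 0 \<Longrightarrow> \<exists>\<delta>>0. \<forall>z\<in>S. a z \<le> \<delta> \<longrightarrow> g z \<le> \<epsilon>"
  shows "\<exists>r>0. \<exists>\<sigma>. Kinf \<sigma> \<and> (\<forall>z\<in>S. a z < r \<longrightarrow> g z \<le> \<sigma> (a z))"
proof -
  have "\<forall>n. \<exists>\<delta>>0. \<forall>z\<in>S. a z \<le> \<delta> \<longrightarrow> g z \<le> (1/2::real)^n"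
    using small by simp
  then obtain \<delta> where \<delta>_pos: "\<And>n. \<delta> n > 0"
    and \<delta>_small: "\<And>n z. z \<in> S \<Longrightarrow> a z \<le> \<delta> n \<Longrightarrow> g z \<le> (1/2)^n"
    unfolding choice_iff by blast
  have "g z \<le> ramp_sum \<delta> (a z)" if "z \<in> S" and below_\<delta>\<^sub>0: "a z < \<delta> 0" for z
  proof (cases "\<exists>n. \<delta> n < a z")
    case True
    then obtain n where n: "\<delta> n < a z" and least: "\<And>k. k < n \<Longrightarrow> a z \<le> \<delta> k"
      using exists_least_iff[THEN iffD1, OF True] by (auto simp: not_less)
    then obtain m where "n = Suc m"
      using below_\<delta>\<^sub>0 by (cases n) auto
    then have "g z \<le> (1/2)^m"
      using least[of m] \<delta>_small that(1) by simp
    also have "\<dots> \<le> ramp_sum \<delta> (a z)"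
      using power_half_le_ramp_sum[of \<delta>, OF \<delta>_pos] n \<open>n = Suc m\<close> by simp
    finally show ?thesis .
  next
    case False
    then have "g z \<le> 0"
      using \<delta>_small that(1) by (intro nonpos_if_le_geometric) (simp add: not_less)
    also have "\<dots> \<le> ramp_sum \<delta> (a z)"
      using ramp_sum_ge_self[of \<delta>, OF \<delta>_pos nonneg[OF that(1)]] nonneg[OF that(1)] by linarith
    finally show ?thesis .
  qed
  then show ?thesis
    using \<delta>_pos Kinf_ramp_sum[of \<delta>, OF \<delta>_pos] by blast
qed

lemma OULS_if_output_uniformly_small:
  fixes phi :: "real \<Rightarrow> 'x::real_normed_vector \<Rightarrow> (real \<Rightarrow> 'u::real_vector) \<Rightarrow> 'x"
    and h :: "'x \<Rightarrow> 'u \<Rightarrow> 'y::real_normed_vector"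
  assumes nU_nonneg: "\<And>u. u \<in> Us \<Longrightarrow> 0 \<le> nU u"
    and small: "\<And>\<epsilon>. \<epsilon> > 0 \<Longrightarrow> \<exists>\<delta>>0. \<forall>t\<in>T. \<forall>x. \<forall>u\<in>Us.
        norm x \<le> \<delta> \<and> nU u \<le> \<delta> \<longrightarrow> norm (sys_output phi h t x u) \<le> \<epsilon>"
  shows "OULS T Us nU phi h"
proof -
  define S where "S = T \<times> (UNIV :: 'x set) \<times> Us"
  define a :: "real \<times> 'x \<times> (real \<Rightarrow> 'u) \<Rightarrow> real" where "a = (\<lambda>(t, x, u). max (norm x) (nU u))"
  define g where "g = (\<lambda>(t, x, u). norm (sys_output phi h t x u))"
  have "0 \<le> a z" if "z \<in> S" for z
    using that nU_nonneg by (auto simp: S_def a_def le_max_iff_disj)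
  moreover have "\<exists>\<delta>>0. \<forall>z\<in>S. a z \<le> \<delta> \<longrightarrow> g z \<le> \<epsilon>" if \<epsilon>_pos: "\<epsilon> > 0" for \<epsilon>
  proof -
    obtain \<delta> where "\<delta> > 0" and "\<forall>t\<in>T. \<forall>x. \<forall>u\<in>Us.
        norm x \<le> \<delta> \<and> nU u \<le> \<delta> \<longrightarrow> norm (sys_output phi h t x u) \<le> \<epsilon>"
      using small[OF \<epsilon>_pos] by blast
    then show ?thesis
      by (intro exI[of _ \<delta>]) (auto simp: S_def a_def g_def)
  qed
  ultimately have "\<exists>r>0. \<exists>\<sigma>. Kinf \<sigma> \<and> (\<forall>z\<in>S. a z < r \<longrightarrow> g z \<le> \<sigma> (a z))"
    by (rule Kinf_majorant_if_uniformly_small)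
  then obtain r \<sigma> where "r > 0" "Kinf \<sigma>"
    and \<sigma>_bound: "\<And>t x u. t \<in> T \<Longrightarrow> u \<in> Us \<Longrightarrow> max (norm x) (nU u) < r \<Longrightarrow>
        norm (sys_output phi h t x u) \<le> \<sigma> (max (norm x) (nU u))"
    by (fastforce simp: S_def a_def g_def)
  have "norm (sys_output phi h t x u) \<le> \<sigma> (norm x) + \<sigma> (nU u)"
    if "norm x < r" "u \<in> Us" "nU u < r" "t \<in> T" for t x u
  proof -
    have "norm (sys_output phi h t x u) \<le> \<sigma> (max (norm x) (nU u))"
      using \<sigma>_bound that by simp
    also have "\<dots> \<le> \<sigma> (norm x) + \<sigma> (nU u)"
      using Kinf_max_le_add \<open>Kinf \<sigma>\<close> nU_nonneg \<open>u \<in> Us\<close> by simp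
    finally show ?thesis .
  qed
  then show ?thesis
    unfolding OULS_def using \<open>r > 0\<close> \<open>Kinf \<sigma>\<close> by blast
qed

lemma output_uniformly_small_if_OUAG_OCEP:
  assumes nU_nonneg: "\<And>u. u \<in> Us \<Longrightarrow> 0 \<le> nU u"
    and "OUAG T Us nU phi h" and "OCEP T Us nU phi h" and "\<epsilon> > 0"
  shows "\<exists>\<delta>>0. \<forall>t\<in>T. \<forall>x. \<forall>u\<in>Us.
      norm x \<le> \<delta> \<and> nU u \<le> \<delta> \<longrightarrow> norm (sys_output phi h t x u) \<le> \<epsilon>"
proof -
  obtain \<gamma> where "Kinf \<gamma>" and gain: "\<forall>\<epsilon>>0. \<forall>r>0. \<forall>s>0. \<exists>\<tau>\<in>T. \<forall>x u t.
      norm x < r \<and> u \<in> Us \<and> nU u < s \<and> t \<in> T \<and> t \<ge> \<tau> \<longrightarrow>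
      norm (sys_output phi h t x u) \<le> \<epsilon> + \<gamma> (nU u)"
    using assms(2) unfolding OUAG_def by blast
  obtain \<tau> where "\<tau> \<in> T" and late: "\<forall>x u t. norm x < 1 \<and> u \<in> Us \<and> nU u < 1 \<and>
      t \<in> T \<and> t \<ge> \<tau> \<longrightarrow> norm (sys_output phi h t x u) \<le> \<epsilon>/2 + \<gamma> (nU u)"
    using gain[rule_format, of "\<epsilon>/2" 1 1] \<open>\<epsilon> > 0\<close> by auto
  obtain \<delta>\<^sub>1 where "\<delta>\<^sub>1 > 0" and early: "\<forall>t x u. t \<in> T \<and> t \<le> \<tau> \<and> norm x \<le> \<delta>\<^sub>1 \<and>
      u \<in> Us \<and> nU u \<le> \<delta>\<^sub>1 \<longrightarrow> norm (sys_output phi h t x u) \<le> \<epsilon>"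
    using assms(3) \<open>\<tau> \<in> T\<close> \<open>\<epsilon> > 0\<close> unfolding OCEP_def by blast
  obtain \<delta>\<^sub>2 where "\<delta>\<^sub>2 > 0" and gain_small: "\<And>s. 0 \<le> s \<Longrightarrow> s < \<delta>\<^sub>2 \<Longrightarrow> \<gamma> s < \<epsilon>/2"
    using Kinf_small_near_zero[OF \<open>Kinf \<gamma>\<close>, of "\<epsilon>/2"] \<open>\<epsilon> > 0\<close> by auto
  define \<delta> where "\<delta> = min \<delta>\<^sub>1 (min (\<delta>\<^sub>2/2) (1/2))"
  have "norm (sys_output phi h t x u) \<le> \<epsilon>"
    if "t \<in> T" "u \<in> Us" "norm x \<le> \<delta>" "nU u \<le> \<delta>" for t x u
  proof (cases "t \<le> \<tau>")
    case True
    then show ?thesis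
      using early that by (simp add: \<delta>_def)
  next
    case False
    then have "norm (sys_output phi h t x u) \<le> \<epsilon>/2 + \<gamma> (nU u)"
      using late that by (simp add: \<delta>_def)
    moreover have "\<gamma> (nU u) < \<epsilon>/2"
      using gain_small nU_nonneg that \<open>\<delta>\<^sub>2 > 0\<close> by (simp add: \<delta>_def)
    ultimately show ?thesis
      by simp
  qed
  moreover have "\<delta> > 0"
    using \<open>\<delta>\<^sub>1 > 0\<close> \<open>\<delta>\<^sub>2 > 0\<close> by (simp add: \<delta>_def)
  ultimately show ?thesis
    by blast
qed

theorem lemma6:
  fixes T :: "real set" and Us :: "(real \<Rightarrow> 'u::real_vector) set"
    and nU :: "(real \<Rightarrow> 'u) \<Rightarrow> real"
    and phi :: "real \<Rightarrow> 'x::real_normed_vector \<Rightarrow> (real \<Rightarrow> 'u) \<Rightarrow> 'x"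
    and h :: "'x \<Rightarrow> 'u \<Rightarrow> 'y::real_normed_vector"
  assumes "control_system T Us nU phi h"
    and "OUAG T Us nU phi h"
    and "OCEP T Us nU phi h"
  shows "OULS T Us nU phi h"
proof -
  have nU_nonneg: "\<And>u. u \<in> Us \<Longrightarrow> 0 \<le> nU u"
    using assms(1) unfolding control_system_def by (elim conjE) blast
  show ?thesis
    using nU_nonneg output_uniformly_small_if_OUAG_OCEP[OF nU_nonneg assms(2,3)]
    by (rule OULS_if_output_uniformly_small)
qed

end
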